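(* Let $\mathcal H^{\mathbb C}$ be a complex separable infinite-dimensional Hilbert space with a fixed complete orthonormal system $\{e_j\}_{j\ge1}$. Let $K=\{x:\|x\|\le1\}$, the weak closure of the unit sphere, endowed with the weak topology (so $K$ is compact). For each $N$, let $G_N$ be either $U(N)$ or $SU(N)$, acting on $\mathcal H^{\mathbb C}$ via its fundamental representation on $\operatorname{span}_{\mathbb C}(e_1,\dots,e_N)$ and trivially on its orthogonal complement. Define $$\mu^x_N(A)=\mu_{G_N}(\{g\in G_N:gx\in A\})$$ for $x\in K$ and Borel $A\subseteq K$, with $\mu_{G_N}$ the normalised Haar measure. Then for every $x\in K$, $\mu^x_N\to\delta_0$ weakly as $N\to\infty$.
   Context: The weak topology is the coarsest topology making all maps $x\mapsto\langle v,x\rangle$, $v\in\mathcal H^{\mathbb C}$, continuous. Weak convergence of probability measures on $K$ means convergence of integrals of all continuous functions on $K$. $\delta_0$ is the Dirac measure at the origin. *)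

theory Defs
  imports "HOL-Analysis.Analysis" "HOL-Probability.Probability"
begin

text \<open>A complex separable infinite-dimensional Hilbert space with fixed complete
orthonormal system e_1, e_2, ... is modelled (via coordinates w.r.t. that system)
as l2 of square-summable complex sequences; e_(j+1) is the indicator of index j
(0-based indexing).\<close>

definition l2 :: "(nat \<Rightarrow> complex) set" where
  "l2 = {x. summable (\<lambda>i. (cmod (x i))^2)}"

definition l2_norm :: "(nat \<Rightarrow> complex) \<Rightarrow> real" where
  "l2_norm x = sqrt (\<Sum>i. (cmod (x i))^2)"

definition l2_inner :: "(nat \<Rightarrow> complex) \<Rightarrow> (nat \<Rightarrow> complex) \<Rightarrow> complex" where
  "l2_inner v x = (\<Sum>i. cnj (v i) * x i)"

definition weak_top :: "(nat \<Rightarrow> complex) topology" where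
  "weak_top = topology_generated_by
     {{x \<in> l2. l2_inner v x \<in> U} | v U. v \<in> l2 \<and> open U}"

definition Kball :: "(nat \<Rightarrow> complex) set" where
  "Kball = {x \<in> l2. l2_norm x \<le> 1}"

definition K_top :: "(nat \<Rightarrow> complex) topology" where
  "K_top = subtopology weak_top Kball"

definition borel_of_top :: "'a topology \<Rightarrow> 'a measure" where
  "borel_of_top T = sigma (topspace T) {U. openin T U}"

text \<open>An N x N matrix is represented as a function nat => nat => complex vanishing
outside {0..<N} x {0..<N}.\<close>

definition mat_N :: "nat \<Rightarrow> (nat \<Rightarrow> nat \<Rightarrow> complex) set" where
  "mat_N N = {M. \<forall>i j. \<not> (i < N \<and> j < N) \<longrightarrow> M i j = 0}"

definition mat_mult :: "nat \<Rightarrow> (nat \<Rightarrow> nat \<Rightarrow> complex) \<Rightarrow> (nat \<Rightarrow> nat \<Rightarrow> complex)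
    \<Rightarrow> (nat \<Rightarrow> nat \<Rightarrow> complex)" where
  "mat_mult N A B = (\<lambda>i j. if i < N \<and> j < N then \<Sum>k<N. A i k * B k j else 0)"

definition mat_det :: "nat \<Rightarrow> (nat \<Rightarrow> nat \<Rightarrow> complex) \<Rightarrow> complex" where
  "mat_det N M = (\<Sum>p | p permutes {..<N}. of_int (sign p) * (\<Prod>i<N. M i (p i)))"

definition unitary_group :: "nat \<Rightarrow> (nat \<Rightarrow> nat \<Rightarrow> complex) set" where
  "unitary_group N = {M \<in> mat_N N. \<forall>i<N. \<forall>j<N.
      (\<Sum>k<N. cnj (M k i) * M k j) = (if i = j then 1 else 0)}"

definition special_unitary_group :: "nat \<Rightarrow> (nat \<Rightarrow> nat \<Rightarrow> complex) set" where
  "special_unitary_group N = {M \<in> unitary_group N. mat_det N M = 1}"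

definition act :: "nat \<Rightarrow> (nat \<Rightarrow> nat \<Rightarrow> complex) \<Rightarrow> (nat \<Rightarrow> complex) \<Rightarrow> (nat \<Rightarrow> complex)" where
  "act N M x = (\<lambda>i. if i < N then (\<Sum>j<N. M i j * x j) else x i)"

definition is_haar :: "nat \<Rightarrow> (nat \<Rightarrow> nat \<Rightarrow> complex) set
    \<Rightarrow> (nat \<Rightarrow> nat \<Rightarrow> complex) measure \<Rightarrow> bool" where
  "is_haar N G \<mu> \<longleftrightarrow> prob_space \<mu> \<and> sets \<mu> = sets (restrict_space borel G)
     \<and> (\<forall>g\<in>G. \<forall>A\<in>sets \<mu>. emeasure \<mu> {h \<in> G. mat_mult N g h \<in> A} = emeasure \<mu> A)"

definition orbit_measure :: "nat \<Rightarrow> (nat \<Rightarrow> nat \<Rightarrow> complex) measure \<Rightarrow> (nat \<Rightarrow> complex)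
    \<Rightarrow> (nat \<Rightarrow> complex) measure" where
  "orbit_measure N \<mu> x = distr \<mu> (borel_of_top K_top) (\<lambda>g. act N g x)"

end

theory Submission
  imports Defs
begin

text \<open>Write \<open>w\<^sub>a = (g x)\<^sub>a\<close> for \<open>a < N\<close> and Haar-distributed \<open>g\<close>. Left multiplication
  by a diagonal phase matrix composed with a transposition, with phases chosen to make the
  determinant \<open>1\<close>, preserves Haar measure on both \<open>U(N)\<close> and \<open>SU(N)\<close>. It follows that the
  \<open>w\<^sub>a\<close> are uncorrelated and all have second moment \<open>\<Sum>\<^sub>j\<^sub><\<^sub>N |x\<^sub>j|\<^sup>2 / N\<close>. Hence for each
  \<open>v\<close> the second moment of \<open>\<langle>v, g x\<rangle>\<close> is at most \<open>2\<parallel>v\<parallel>\<^sup>2\<parallel>x\<parallel>\<^sup>2/N\<close> plus twice the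
  square of the tail beyond \<open>N\<close> of the series for \<open>\<langle>v, x\<rangle>\<close>, and tends to \<open>0\<close>. A weakly
  continuous \<open>f\<close> on \<open>K\<close> is bounded (\<open>K\<close> is weakly sequentially compact) and is
  \<open>\<epsilon>\<close>-close to \<open>f 0\<close> wherever finitely many \<open>|\<langle>v, \<cdot>\<rangle>|\<close> are small, so a Chebyshev
  estimate gives \<open>\<integral> f d\<mu>\<^sup>x\<^sub>N \<rightarrow> f 0\<close>.\<close>

section \<open>Square-summable sequences and the unit ball\<close>

lemma zero_in_l2: "(\<lambda>_. 0) \<in> l2"
  by (simp add: l2_def)

lemma Kball_iff:
  "x \<in> Kball \<longleftrightarrow> summable (\<lambda>i. (cmod (x i))\<^sup>2) \<and> (\<Sum>i. (cmod (x i))\<^sup>2) \<le> 1"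
  by (simp add: Kball_def l2_def l2_norm_def)

lemma Kball_subset_l2: "Kball \<subseteq> l2"
  by (auto simp: Kball_def)

lemma zero_in_Kball: "(\<lambda>_. 0) \<in> Kball"
  by (simp add: Kball_iff)

lemma Kball_coord_le_1:
  assumes "x \<in> Kball"
  shows "cmod (x i) \<le> 1"
proof -
  have "(\<Sum>j\<in>{i}. (cmod (x j))\<^sup>2) \<le> (\<Sum>j. (cmod (x j))\<^sup>2)"
    by (rule sum_le_suminf) (use assms in \<open>auto simp: Kball_iff\<close>)
  with assms have "(cmod (x i))\<^sup>2 \<le> 1\<^sup>2"
    by (simp add: Kball_iff)
  then show ?thesis
    by (rule power2_le_imp_le) simp
qed

lemma l2_inner_zero_right [simp]: "l2_inner v (\<lambda>_. 0) = 0"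
  by (simp add: l2_inner_def)

lemma suminf_shift_le:
  fixes f :: "nat \<Rightarrow> real"
  assumes "summable f" and "\<And>i. 0 \<le> f i"
  shows "(\<Sum>n. f (n + M)) \<le> suminf f"
proof -
  have "0 \<le> sum f {..<M}"
    by (simp add: sum_nonneg assms(2))
  then show ?thesis
    using suminf_split_initial_segment[OF assms(1), of M] by linarith
qed

lemma tendsto_suminf_shift_zero:
  fixes f :: "nat \<Rightarrow> 'a::banach"
  assumes "summable f"
  shows "(\<lambda>M. \<Sum>n. f (n + M)) \<longlonglongrightarrow> 0"
proof (rule LIMSEQ_I)
  fix r :: real
  assume "0 < r"
  then show "\<exists>M0. \<forall>M\<ge>M0. norm ((\<Sum>n. f (n + M)) - 0) < r"
    using suminf_exist_split[OF _ assms] by simp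
qed

lemma mult_le_weighted_squares:
  fixes a b t :: real
  assumes "t > 0"
  shows "a * b \<le> t / 2 * a\<^sup>2 + 1 / (2 * t) * b\<^sup>2"
proof -
  have "0 \<le> (t * a - b)\<^sup>2 / (2 * t)"
    using assms by simp
  then show ?thesis
    using assms by (simp add: power2_diff field_simps power2_eq_square)
qed

lemma summable_norm_mult_of_square_summable:
  fixes a b :: "nat \<Rightarrow> complex"
  assumes "summable (\<lambda>i. (cmod (a i))\<^sup>2)" and "summable (\<lambda>i. (cmod (b i))\<^sup>2)"
  shows "summable (\<lambda>i. cmod (a i * b i))"
proof (rule summable_comparison_test')
  show "summable (\<lambda>i. ((cmod (a i))\<^sup>2 + (cmod (b i))\<^sup>2) / 2)"
    using assms by (intro summable_divide summable_add)
  show "norm (cmod (a i * b i)) \<le> ((cmod (a i))\<^sup>2 + (cmod (b i))\<^sup>2) / 2" for i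
    using mult_le_weighted_squares[of 1 "cmod (a i)" "cmod (b i)"]
    by (simp add: norm_mult add_divide_distrib)
qed

lemma norm_suminf_mult_le:
  fixes a b :: "nat \<Rightarrow> complex"
  assumes a: "summable (\<lambda>i. (cmod (a i))\<^sup>2)" and b: "summable (\<lambda>i. (cmod (b i))\<^sup>2)"
    and t: "t > 0"
  shows "cmod (\<Sum>i. a i * b i)
    \<le> t / 2 * (\<Sum>i. (cmod (a i))\<^sup>2) + 1 / (2 * t) * (\<Sum>i. (cmod (b i))\<^sup>2)"
proof -
  have summable_bound: "summable (\<lambda>i. t / 2 * (cmod (a i))\<^sup>2 + 1 / (2 * t) * (cmod (b i))\<^sup>2)"
    using a b by (intro summable_add summable_mult)
  have norm_summable: "summable (\<lambda>i. cmod (a i * b i))"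
    by (rule summable_norm_mult_of_square_summable[OF a b])
  have "cmod (\<Sum>i. a i * b i) \<le> (\<Sum>i. cmod (a i * b i))"
    by (rule summable_norm[OF norm_summable])
  also have "\<dots> \<le> (\<Sum>i. t / 2 * (cmod (a i))\<^sup>2 + 1 / (2 * t) * (cmod (b i))\<^sup>2)"
    using mult_le_weighted_squares[OF t]
    by (intro suminf_le norm_summable summable_bound) (simp add: norm_mult)
  also have "\<dots> = (\<Sum>i. t / 2 * (cmod (a i))\<^sup>2) + (\<Sum>i. 1 / (2 * t) * (cmod (b i))\<^sup>2)"
    by (rule suminf_add[symmetric]) (intro summable_mult a b)+
  also have "\<dots> = t / 2 * (\<Sum>i. (cmod (a i))\<^sup>2) + 1 / (2 * t) * (\<Sum>i. (cmod (b i))\<^sup>2)"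
    by (simp only: suminf_mult[OF a] suminf_mult[OF b])
  finally show ?thesis .
qed

lemma summable_l2_inner:
  assumes "v \<in> l2" and "z \<in> l2"
  shows "summable (\<lambda>i. cnj (v i) * z i)"
  by (rule summable_norm_cancel, rule summable_norm_mult_of_square_summable)
    (use assms in \<open>simp_all add: l2_def\<close>)

definition l2_inner_tail :: "(nat \<Rightarrow> complex) \<Rightarrow> (nat \<Rightarrow> complex) \<Rightarrow> nat \<Rightarrow> complex" where
  "l2_inner_tail v z M = (\<Sum>n. cnj (v (n + M)) * z (n + M))"

lemma l2_inner_split:
  assumes "v \<in> l2" and "z \<in> l2"
  shows "l2_inner v z = (\<Sum>i<M. cnj (v i) * z i) + l2_inner_tail v z M"
  using suminf_split_initial_segment[OF summable_l2_inner[OF assms], of M]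
  by (simp add: l2_inner_def l2_inner_tail_def)

lemma l2_inner_tail_tendsto_zero:
  assumes "v \<in> l2" and "z \<in> l2"
  shows "(\<lambda>M. l2_inner_tail v z M) \<longlonglongrightarrow> 0"
  unfolding l2_inner_tail_def by (rule tendsto_suminf_shift_zero[OF summable_l2_inner[OF assms]])

lemma norm_l2_inner_tail_le:
  assumes v: "v \<in> l2" and z: "z \<in> Kball" and t: "t > 0"
  shows "cmod (l2_inner_tail v z M) \<le> t / 2 * (\<Sum>n. (cmod (v (n + M)))\<^sup>2) + 1 / (2 * t)"
proof -
  have sv: "summable (\<lambda>n. (cmod (cnj (v (n + M))))\<^sup>2)"
    using v summable_iff_shift[of "\<lambda>i. (cmod (v i))\<^sup>2" M] by (simp add: l2_def)
  have sz: "summable (\<lambda>n. (cmod (z (n + M)))\<^sup>2)"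
    using z summable_iff_shift[of "\<lambda>i. (cmod (z i))\<^sup>2" M] by (simp add: Kball_iff)
  have "(\<Sum>n. (cmod (z (n + M)))\<^sup>2) \<le> 1"
    using z suminf_shift_le[of "\<lambda>i. (cmod (z i))\<^sup>2" M] by (simp add: Kball_iff)
  then have "1 / (2 * t) * (\<Sum>n. (cmod (z (n + M)))\<^sup>2) \<le> 1 / (2 * t)"
    using t by (simp add: divide_le_eq)
  then show ?thesis
    using norm_suminf_mult_le[OF sv sz t] by (simp add: l2_inner_tail_def)
qed

section \<open>The weak topology on the unit ball\<close>

definition weak_subbasis :: "(nat \<Rightarrow> complex) set set" where
  "weak_subbasis = {{x \<in> l2. l2_inner v x \<in> U} | v U. v \<in> l2 \<and> open U}"

lemma weak_top_eq: "weak_top = topology_generated_by weak_subbasis"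
  unfolding weak_top_def weak_subbasis_def ..

lemma topspace_weak_top: "topspace weak_top = l2"
proof -
  have "{x \<in> l2. l2_inner (\<lambda>_. 0) x \<in> UNIV} \<in> weak_subbasis"
    unfolding weak_subbasis_def using zero_in_l2 by blast
  then have "\<Union>weak_subbasis = l2"
    unfolding weak_subbasis_def by auto
  then show ?thesis
    by (simp add: weak_top_eq)
qed

lemma topspace_K_top: "topspace K_top = Kball"
  using topspace_weak_top Kball_subset_l2 by (auto simp: K_top_def)

definition weak_basic_nbhd :: "(nat \<Rightarrow> complex) set \<Rightarrow> real \<Rightarrow> (nat \<Rightarrow> complex) \<Rightarrow> (nat \<Rightarrow> complex) set" where
  "weak_basic_nbhd V d z = {w \<in> l2. \<forall>v\<in>V. cmod (l2_inner v w - l2_inner v z) < d}"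

lemma weak_open_contains_basic_nbhd:
  assumes "generate_topology_on weak_subbasis W" and "z \<in> W"
  shows "\<exists>V d. finite V \<and> V \<subseteq> l2 \<and> d > 0 \<and> weak_basic_nbhd V d z \<subseteq> W"
  using assms
proof (induction arbitrary: z)
  case Empty
  then show ?case by simp
next
  case (Int a b)
  obtain V1 d1 where V1: "finite V1" "V1 \<subseteq> l2" "d1 > 0" "weak_basic_nbhd V1 d1 z \<subseteq> a"
    using Int.IH(1)[OF IntD1[OF Int.prems]] by blast
  obtain V2 d2 where V2: "finite V2" "V2 \<subseteq> l2" "d2 > 0" "weak_basic_nbhd V2 d2 z \<subseteq> b"
    using Int.IH(2)[OF IntD2[OF Int.prems]] by blast
  have "weak_basic_nbhd (V1 \<union> V2) (min d1 d2) z
      \<subseteq> weak_basic_nbhd V1 d1 z \<inter> weak_basic_nbhd V2 d2 z"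
    by (auto simp: weak_basic_nbhd_def)
  with V1(4) V2(4) have sub: "weak_basic_nbhd (V1 \<union> V2) (min d1 d2) z \<subseteq> a \<inter> b"
    by blast
  show ?case
    using V1(1-3) V2(1-3) sub by (intro exI[of _ "V1 \<union> V2"] exI[of _ "min d1 d2"]) simp
next
  case (UN K)
  from UN.prems obtain k where k: "k \<in> K" "z \<in> k"
    by blast
  obtain V d where V: "finite V" "V \<subseteq> l2" "d > 0" "weak_basic_nbhd V d z \<subseteq> k"
    using UN.IH[OF k] by blast
  have "weak_basic_nbhd V d z \<subseteq> \<Union>K"
    using V(4) k(1) by blast
  then show ?case
    using V(1-3) by (intro exI[of _ V] exI[of _ d]) simp
next
  case (Basis s)
  from Basis.hyps obtain v U where s: "s = {x \<in> l2. l2_inner v x \<in> U}" "v \<in> l2" "open U"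
    unfolding weak_subbasis_def by blast
  then have "l2_inner v z \<in> U"
    using Basis.prems by simp
  then obtain d where d: "d > 0" "ball (l2_inner v z) d \<subseteq> U"
    using s(3) open_contains_ball by blast
  have "weak_basic_nbhd {v} d z \<subseteq> s"
  proof
    fix w
    assume "w \<in> weak_basic_nbhd {v} d z"
    then have "w \<in> l2" "l2_inner v w \<in> ball (l2_inner v z) d"
      by (simp_all add: weak_basic_nbhd_def dist_norm norm_minus_commute)
    then show "w \<in> s"
      using d s(1) by blast
  qed
  then show ?case
    using s(2) d(1) by (intro exI[of _ "{v}"] exI[of _ d]) simp
qed

lemma K_top_continuous_basic_nbhd:
  assumes f: "continuous_map K_top euclideanreal f" and z: "z \<in> Kball" and e: "e > 0"
  shows "\<exists>V d. finite V \<and> V \<subseteq> l2 \<and> d > 0 \<and>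
    (\<forall>w \<in> Kball \<inter> weak_basic_nbhd V d z. \<bar>f w - f z\<bar> < e)"
proof -
  have "openin K_top {w \<in> topspace K_top. f w \<in> ball (f z) e}"
    using f unfolding continuous_map by auto
  then have "openin K_top {w \<in> Kball. f w \<in> ball (f z) e}"
    by (simp only: topspace_K_top)
  then have "\<exists>T. openin weak_top T \<and> {w \<in> Kball. f w \<in> ball (f z) e} = T \<inter> Kball"
    unfolding K_top_def openin_subtopology .
  then obtain T where T: "openin weak_top T" "{w \<in> Kball. f w \<in> ball (f z) e} = T \<inter> Kball"
    by (elim exE conjE)
  have "z \<in> {w \<in> Kball. f w \<in> ball (f z) e}"
    using z e by simp
  then have "z \<in> T"
    using T(2) by blast
  moreover have "generate_topology_on weak_subbasis T"
    using T(1) by (simp add: weak_top_eq openin_topology_generated_by_iff)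
  ultimately obtain V d where V: "finite V" "V \<subseteq> l2" "d > 0" "weak_basic_nbhd V d z \<subseteq> T"
    by (metis weak_open_contains_basic_nbhd)
  have "\<bar>f w - f z\<bar> < e" if w: "w \<in> Kball \<inter> weak_basic_nbhd V d z" for w
  proof -
    from w V(4) have "w \<in> T \<inter> Kball"
      by blast
    then have "w \<in> {w \<in> Kball. f w \<in> ball (f z) e}"
      by (simp only: T(2))
    then show ?thesis
      by (simp add: dist_real_def abs_minus_commute)
  qed
  with V(1-3) show ?thesis
    by (intro exI[of _ V] exI[of _ d]) simp
qed

lemma K_top_continuous_tendsto:
  assumes f: "continuous_map K_top euclideanreal f" and z: "z \<in> Kball"
    and zs: "\<And>n. zs n \<in> Kball"
    and weak_lim: "\<And>v. v \<in> l2 \<Longrightarrow> (\<lambda>n. l2_inner v (zs n)) \<longlonglongrightarrow> l2_inner v z"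
  shows "(\<lambda>n. f (zs n)) \<longlonglongrightarrow> f z"
proof (rule tendstoI)
  fix e :: real
  assume "e > 0"
  obtain V d where V: "finite V" "V \<subseteq> l2" "d > 0"
    and near: "\<forall>w \<in> Kball \<inter> weak_basic_nbhd V d z. \<bar>f w - f z\<bar> < e"
    using K_top_continuous_basic_nbhd[OF f z \<open>e > 0\<close>] by blast
  have "\<forall>\<^sub>F n in sequentially. \<forall>v\<in>V. cmod (l2_inner v (zs n) - l2_inner v z) < d"
  proof (rule eventually_ball_finite[OF V(1)], rule ballI)
    fix v
    assume "v \<in> V"
    with V(2) weak_lim have "(\<lambda>n. l2_inner v (zs n)) \<longlonglongrightarrow> l2_inner v z"
      by blast
    from tendstoD[OF this V(3)]
    show "\<forall>\<^sub>F n in sequentially. cmod (l2_inner v (zs n) - l2_inner v z) < d"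
      by (simp add: dist_norm)
  qed
  then show "\<forall>\<^sub>F n in sequentially. dist (f (zs n)) (f z) < e"
  proof eventually_elim
    case (elim n)
    have "zs n \<in> l2"
      using zs Kball_subset_l2 by blast
    with elim have "zs n \<in> weak_basic_nbhd V d z"
      by (simp add: weak_basic_nbhd_def)
    with zs[of n] near have "\<bar>f (zs n) - f z\<bar> < e"
      by blast
    then show ?case
      by (simp add: dist_real_def)
  qed
qed

text \<open>The head of \<open>\<langle>v, y\<^sub>k\<rangle>\<close> converges termwise; the tail is uniformly small on \<open>K\<close> by the
  weighted AM-GM inequality.\<close>

lemma l2_inner_tendsto_of_coordinatewise:
  assumes y: "\<And>k. y k \<in> Kball" and z: "z \<in> Kball"
    and coord: "\<And>i. (\<lambda>k. y k i) \<longlonglongrightarrow> z i" and v: "v \<in> l2"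
  shows "(\<lambda>k. l2_inner v (y k)) \<longlonglongrightarrow> l2_inner v z"
proof (rule tendstoI)
  fix e :: real
  assume e: "e > 0"
  define t where "t = 4 / e"
  have t: "t > 0"
    using e by (simp add: t_def)
  have "(\<lambda>M. \<Sum>n. (cmod (v (n + M)))\<^sup>2) \<longlonglongrightarrow> 0"
    using v by (intro tendsto_suminf_shift_zero) (simp add: l2_def)
  moreover have "e\<^sup>2 / 16 > 0"
    using e by simp
  ultimately have "\<forall>\<^sub>F M in sequentially. (\<Sum>n. (cmod (v (n + M)))\<^sup>2) < e\<^sup>2 / 16"
    by (rule order_tendstoD(2))
  then obtain M0 where "\<forall>M\<ge>M0. (\<Sum>n. (cmod (v (n + M)))\<^sup>2) < e\<^sup>2 / 16"
    unfolding eventually_sequentially by blast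
  then obtain M where M: "(\<Sum>n. (cmod (v (n + M)))\<^sup>2) < e\<^sup>2 / 16"
    by blast
  have tail: "cmod (l2_inner_tail v w M) < e / 4" if "w \<in> Kball" for w
  proof -
    have "t / 2 * (\<Sum>n. (cmod (v (n + M)))\<^sup>2) < t / 2 * (e\<^sup>2 / 16)"
      using M t by simp
    moreover have "t / 2 * (e\<^sup>2 / 16) + 1 / (2 * t) = e / 4"
      using e by (simp add: t_def power2_eq_square)
    ultimately show ?thesis
      using norm_l2_inner_tail_le[OF v that t, of M] by linarith
  qed
  let ?head = "\<lambda>w. \<Sum>i<M. cnj (v i) * w i"
  have "(\<lambda>k. ?head (y k)) \<longlonglongrightarrow> ?head z"
    by (intro tendsto_intros coord)
  from tendstoD[OF this, of "e / 2"] e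
  have "\<forall>\<^sub>F k in sequentially. cmod (?head (y k) - ?head z) < e / 2"
    by (simp add: dist_norm)
  then show "\<forall>\<^sub>F k in sequentially. dist (l2_inner v (y k)) (l2_inner v z) < e"
  proof eventually_elim
    case (elim k)
    have split: "l2_inner v w = ?head w + l2_inner_tail v w M" if "w \<in> Kball" for w
      using that Kball_subset_l2 by (intro l2_inner_split[OF v]) blast
    have "dist (l2_inner v (y k)) (l2_inner v z)
        \<le> cmod (?head (y k) - ?head z) + cmod (l2_inner_tail v (y k) M - l2_inner_tail v z M)"
      unfolding dist_norm split[OF y] split[OF z] by (rule norm_diff_triangle_ineq)
    also have "\<dots> < e"
      using elim tail[OF y, of k] tail[OF z]
        norm_triangle_ineq4[of "l2_inner_tail v (y k) M" "l2_inner_tail v z M"]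
      by linarith
    finally show ?case .
  qed
qed

lemma Kball_coordinatewise_convergent_subseq:
  fixes zs :: "nat \<Rightarrow> nat \<Rightarrow> complex"
  assumes zs: "\<And>n. zs n \<in> Kball"
  obtains r z where "strict_mono r" "z \<in> Kball" "\<forall>i. (\<lambda>k. zs (r k) i) \<longlonglongrightarrow> z i"
proof -
  let ?P = "PiE UNIV (\<lambda>_::nat. cball (0::complex) 1)"
  have "compact ?P"
    using compactin_PiE[of "\<lambda>_. euclidean" UNIV "\<lambda>_. cball (0::complex) 1"]
    by (simp add: euclidean_product_topology)
  then have "seq_compact ?P"
    by (rule compact_imp_seq_compact)
  moreover have "\<forall>n. zs n \<in> ?P"
    using Kball_coord_le_1[OF zs] by (auto simp: PiE_def)
  ultimately obtain l r where l: "l \<in> ?P" "strict_mono r" "(zs \<circ> r) \<longlonglongrightarrow> l"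
    by (rule seq_compactE)
  have coord: "(\<lambda>k. zs (r k) i) \<longlonglongrightarrow> l i" for i
    using continuous_on_tendsto_compose[OF continuous_on_product_coordinates l(3), of i]
    by (simp add: comp_def)
  have partial: "(\<Sum>i<M. (cmod (l i))\<^sup>2) \<le> 1" for M
  proof (rule LIMSEQ_le_const2)
    show "(\<lambda>k. \<Sum>i<M. (cmod (zs (r k) i))\<^sup>2) \<longlonglongrightarrow> (\<Sum>i<M. (cmod (l i))\<^sup>2)"
      by (intro tendsto_intros coord)
    have "(\<Sum>i<M. (cmod (zs n i))\<^sup>2) \<le> (\<Sum>i. (cmod (zs n i))\<^sup>2)" for n
      using zs[of n] by (intro sum_le_suminf) (auto simp: Kball_iff)
    also have "(\<Sum>i. (cmod (zs n i))\<^sup>2) \<le> 1" for n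
      using zs[of n] by (simp add: Kball_iff)
    finally show "\<exists>N. \<forall>n\<ge>N. (\<Sum>i<M. (cmod (zs (r n) i))\<^sup>2) \<le> 1"
      by blast
  qed
  have "summable (\<lambda>i. (cmod (l i))\<^sup>2)"
  proof (rule bounded_imp_summable)
    show "(\<Sum>i\<le>n. (cmod (l i))\<^sup>2) \<le> 1" for n
      using partial[of "Suc n"] by (simp add: lessThan_Suc_atMost)
  qed simp
  moreover have "(\<Sum>i. (cmod (l i))\<^sup>2) \<le> 1"
    using calculation partial by (rule suminf_le_const)
  ultimately have "l \<in> Kball"
    by (simp add: Kball_iff)
  then show ?thesis
    using that[OF l(2)] coord by blast
qed

lemma K_top_continuous_bounded:
  assumes f: "continuous_map K_top euclideanreal f"
  obtains B where "\<And>z. z \<in> Kball \<Longrightarrow> \<bar>f z\<bar> \<le> B"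
proof -
  have "\<exists>B. \<forall>z\<in>Kball. \<bar>f z\<bar> \<le> B"
  proof (rule ccontr)
    assume "\<not> ?thesis"
    then have "\<forall>n::nat. \<exists>z\<in>Kball. \<bar>f z\<bar> > real n"
      by (meson not_le)
    then obtain zs where zs: "\<And>n. zs n \<in> Kball" "\<And>n::nat. \<bar>f (zs n)\<bar> > real n"
      by metis
    obtain r z where rz: "strict_mono r" "z \<in> Kball" "\<forall>i. (\<lambda>k. zs (r k) i) \<longlonglongrightarrow> z i"
      by (rule Kball_coordinatewise_convergent_subseq[of zs, OF zs(1)])
    have "(\<lambda>k. f (zs (r k))) \<longlonglongrightarrow> f z"
      using zs(1) rz(2) rz(3)[rule_format]
      by (intro K_top_continuous_tendsto[OF f] l2_inner_tendsto_of_coordinatewise)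
    then have "Bseq (\<lambda>k. f (zs (r k)))"
      by (intro convergent_imp_Bseq convergentI)
    then obtain C where C: "\<And>k. \<bar>f (zs (r k))\<bar> \<le> C"
      by (metis BseqE real_norm_def)
    have "C \<le> real (nat \<lceil>C\<rceil>)"
      by (rule real_nat_ceiling_ge)
    also have "\<dots> \<le> real (r (nat \<lceil>C\<rceil>))"
      using seq_suble[OF rz(1)] by simp
    finally show False
      using zs(2)[of "r (nat \<lceil>C\<rceil>)"] C[of "nat \<lceil>C\<rceil>"] by linarith
  qed
  with that show ?thesis
    by blast
qed

lemma space_borel_of_K_top: "space (borel_of_top K_top) = Kball"
  and sets_borel_of_K_top: "sets (borel_of_top K_top) = sigma_sets Kball {U. openin K_top U}"
proof -
  have "{U. openin K_top U} \<subseteq> Pow (topspace K_top)"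
    using openin_subset by auto
  then show "space (borel_of_top K_top) = Kball"
    and "sets (borel_of_top K_top) = sigma_sets Kball {U. openin K_top U}"
    unfolding borel_of_top_def topspace_K_top by (simp_all add: space_measure_of sets_measure_of)
qed

lemma K_top_continuous_borel_measurable:
  assumes f: "continuous_map K_top euclideanreal f"
  shows "f \<in> borel_measurable (borel_of_top K_top)"
proof (rule borel_measurableI)
  fix S :: "real set"
  assume "open S"
  then have "openin K_top {x \<in> topspace K_top. f x \<in> S}"
    using f by (simp add: continuous_map)
  moreover have "f -` S \<inter> space (borel_of_top K_top) = {x \<in> topspace K_top. f x \<in> S}"
    by (auto simp: space_borel_of_K_top topspace_K_top)
  ultimately show "f -` S \<inter> space (borel_of_top K_top) \<in> sets (borel_of_top K_top)"
    by (auto simp: sets_borel_of_K_top)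
qed

section \<open>Unitary matrices and their action\<close>

definition mat_id :: "nat \<Rightarrow> nat \<Rightarrow> nat \<Rightarrow> complex" where
  "mat_id N = (\<lambda>i j. if i < N \<and> i = j then 1 else 0)"

definition scale_permute_rows ::
    "(nat \<Rightarrow> complex) \<Rightarrow> (nat \<Rightarrow> nat) \<Rightarrow> (nat \<Rightarrow> nat \<Rightarrow> complex) \<Rightarrow> nat \<Rightarrow> nat \<Rightarrow> complex" where
  "scale_permute_rows c t M = (\<lambda>i j. c i * M (t i) j)"

lemma scale_permute_rows_mat_N:
  assumes "M \<in> mat_N N" and "t permutes {..<N}"
  shows "scale_permute_rows c t M \<in> mat_N N"
  using assms unfolding mat_N_def scale_permute_rows_def
  by (auto, metis lessThan_iff permutes_not_in)

lemma scale_permute_rows_unitary: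
  assumes M: "M \<in> unitary_group N" and t: "t permutes {..<N}"
    and c: "\<And>i. i < N \<Longrightarrow> cmod (c i) = 1"
  shows "scale_permute_rows c t M \<in> unitary_group N"
proof -
  have cnj_c: "cnj (c k) * c k = 1" if "k < N" for k
    using c[OF that] by (metis complex_norm_square mult.commute of_real_1 power_one)
  have "(\<Sum>k<N. cnj (scale_permute_rows c t M k i) * scale_permute_rows c t M k j)
      = (if i = j then 1 else 0)" if "i < N" "j < N" for i j
  proof -
    have "cnj (c k * M (t k) i) * (c k * M (t k) j) = (cnj (c k) * c k) * (cnj (M (t k) i) * M (t k) j)"
      for k
      by (simp add: mult_ac)
    then have "(\<Sum>k<N. cnj (scale_permute_rows c t M k i) * scale_permute_rows c t M k j)
        = (\<Sum>k<N. cnj (M (t k) i) * M (t k) j)"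
      by (intro sum.cong) (simp_all add: scale_permute_rows_def cnj_c)
    also have "\<dots> = (\<Sum>k<N. cnj (M k i) * M k j)"
      using sum.permute[OF t, of "\<lambda>k. cnj (M k i) * M k j"] by (simp add: comp_def)
    finally show ?thesis
      using M that by (simp add: unitary_group_def)
  qed
  then show ?thesis
    using M scale_permute_rows_mat_N[OF _ t] by (simp add: unitary_group_def)
qed

lemma mat_det_scale_rows: "mat_det N (scale_permute_rows c id M) = (\<Prod>i<N. c i) * mat_det N M"
  unfolding mat_det_def scale_permute_rows_def
  by (simp add: prod.distrib sum_distrib_left mult_ac)

lemma mat_det_permute_rows:
  assumes t: "t permutes {..<N}"
  shows "mat_det N (scale_permute_rows (\<lambda>_. 1) t M) = of_int (sign t) * mat_det N M"
proof -
  let ?term = "\<lambda>q. of_int (sign q) * (\<Prod>i<N. M i (q i)) :: complex"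
  have prod_eq: "(\<Prod>i<N. M (t i) (p i)) = (\<Prod>i<N. M i ((p \<circ> inv t) i))" for p
    using prod.permute[OF permutes_inv[OF t], of "\<lambda>i. M (t i) (p i)"]
    by (simp add: comp_def permutes_inverses(1)[OF t])
  have sign_eq: "of_int (sign p) = (of_int (sign t) :: complex) * of_int (sign (p \<circ> inv t))"
    if "p permutes {..<N}" for p
  proof -
    have "permutation p" "permutation t"
      using that t by (auto simp: permutation_permutes)
    then have "sign (p \<circ> inv t) = sign p * sign t"
      by (simp add: sign_compose permutation_inverse sign_inverse)
    then show ?thesis
      by (simp flip: of_int_mult)
  qed
  have "mat_det N (scale_permute_rows (\<lambda>_. 1) t M)
      = (\<Sum>p | p permutes {..<N}. of_int (sign t) * ?term (p \<circ> inv t))"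
    unfolding mat_det_def scale_permute_rows_def
    by (rule sum.cong) (auto simp: prod_eq sign_eq mult_ac)
  also have "\<dots> = of_int (sign t) * (\<Sum>p | p permutes {..<N}. ?term (p \<circ> inv t))"
    by (simp add: sum_distrib_left)
  also have "(\<Sum>p | p permutes {..<N}. ?term (p \<circ> inv t)) = (\<Sum>p | p permutes {..<N}. ?term p)"
    using sum_permutations_compose_right[OF permutes_inv[OF t], of ?term] by simp
  finally show ?thesis
    unfolding mat_det_def .
qed

lemma mat_det_scale_permute_rows:
  assumes "t permutes {..<N}"
  shows "mat_det N (scale_permute_rows c t M) = (\<Prod>i<N. c i) * of_int (sign t) * mat_det N M"
proof -
  have "scale_permute_rows c t M = scale_permute_rows c id (scale_permute_rows (\<lambda>_. 1) t M)"
    by (simp add: scale_permute_rows_def)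
  then show ?thesis
    using mat_det_scale_rows mat_det_permute_rows[OF assms] by (simp add: mult_ac)
qed

lemma mat_det_id: "mat_det N (mat_id N) = 1"
proof -
  have "mat_det N (mat_id N) = (\<Sum>p\<in>{id}. of_int (sign p) * (\<Prod>i<N. mat_id N i (p i)))"
    unfolding mat_det_def
  proof (rule sum.mono_neutral_cong_right)
    show "\<forall>p\<in>{p. p permutes {..<N}} - {id}. of_int (sign p) * (\<Prod>i<N. mat_id N i (p i)) = 0"
    proof
      fix p
      assume "p \<in> {p. p permutes {..<N}} - {id}"
      then obtain i where "i < N" "p i \<noteq> i"
        by (auto simp: fun_eq_iff permutes_def)
      then have "(\<Prod>i<N. mat_id N i (p i)) = 0"
        by (intro prod_zero) (auto simp: mat_id_def intro!: bexI[of _ i])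
      then show "of_int (sign p) * (\<Prod>i<N. mat_id N i (p i)) = 0"
        by simp
    qed
  qed (auto simp: finite_permutations)
  also have "\<dots> = 1"
    by (simp add: mat_id_def)
  finally show ?thesis .
qed

lemma mat_id_unitary: "mat_id N \<in> unitary_group N"
  unfolding unitary_group_def mat_N_def mat_id_def
  by (auto simp: if_distrib[of cnj] if_distrib[of "\<lambda>z. z * _"] sum.delta' cong: if_cong)

lemma mat_mult_scale_permute_rows_id:
  assumes M: "M \<in> mat_N N" and t: "t permutes {..<N}"
  shows "mat_mult N (scale_permute_rows c t (mat_id N)) M = scale_permute_rows c t M"
proof (intro ext)
  fix i j
  show "mat_mult N (scale_permute_rows c t (mat_id N)) M i j = scale_permute_rows c t M i j"
  proof (cases "i < N \<and> j < N")
    case True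
    then have ti: "t i < N"
      using t by (metis lessThan_iff permutes_in_image)
    have "(\<Sum>k<N. scale_permute_rows c t (mat_id N) i k * M k j)
        = (\<Sum>k<N. if k = t i then c i * M k j else 0)"
      by (rule sum.cong) (auto simp: scale_permute_rows_def mat_id_def ti)
    with True ti show ?thesis
      by (simp add: mat_mult_def scale_permute_rows_def sum.delta')
  next
    case False
    then show ?thesis
      using scale_permute_rows_mat_N[OF M t, of c] by (auto simp: mat_mult_def mat_N_def)
  qed
qed

lemma mat_id_in_group:
  assumes "G = unitary_group N \<or> G = special_unitary_group N"
  shows "mat_id N \<in> G"
  using assms mat_id_unitary mat_det_id by (auto simp: special_unitary_group_def)

lemma scale_permute_rows_in_group:
  assumes G: "G = unitary_group N \<or> G = special_unitary_group N"
    and t: "t permutes {..<N}" and c: "\<And>i. i < N \<Longrightarrow> cmod (c i) = 1"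
    and det: "(\<Prod>i<N. c i) * of_int (sign t) = 1" and h: "h \<in> G"
  shows "scale_permute_rows c t h \<in> G"
proof -
  have "h \<in> unitary_group N"
    using G h by (auto simp: special_unitary_group_def)
  then have "scale_permute_rows c t h \<in> unitary_group N"
    by (rule scale_permute_rows_unitary[OF _ t c])
  moreover have "mat_det N (scale_permute_rows c t h) = mat_det N h"
    using mat_det_scale_permute_rows[OF t, of c h] det by simp
  ultimately show ?thesis
    using G h by (auto simp: special_unitary_group_def)
qed

definition mat_vec :: "nat \<Rightarrow> (nat \<Rightarrow> nat \<Rightarrow> complex) \<Rightarrow> (nat \<Rightarrow> complex) \<Rightarrow> nat \<Rightarrow> complex" where
  "mat_vec N M x a = (\<Sum>j<N. M a j * x j)"

lemma continuous_on_mat_entry: "continuous_on UNIV (\<lambda>M::nat \<Rightarrow> nat \<Rightarrow> complex. M i j)"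
  by (rule continuous_on_product_then_coordinatewise[OF continuous_on_product_coordinates])

lemma continuous_on_mat_vec: "continuous_on UNIV (\<lambda>M. mat_vec N M x a)"
  unfolding mat_vec_def by (intro continuous_intros continuous_on_mat_entry)

lemma continuous_on_mat_mult_left: "continuous_on UNIV (mat_mult N g)"
proof (intro continuous_on_coordinatewise_then_product)
  fix i j
  show "continuous_on UNIV (\<lambda>h. mat_mult N g h i j)"
    unfolding mat_mult_def
    by (cases "i < N \<and> j < N") (auto intro!: continuous_intros continuous_on_mat_entry)
qed

lemma mat_vec_scale_permute_rows:
  "mat_vec N (scale_permute_rows c t M) x a = c a * mat_vec N M x (t a)"
  unfolding mat_vec_def scale_permute_rows_def by (simp add: sum_distrib_left mult_ac)

lemma unitary_entry_norm_le_1: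
  assumes "M \<in> unitary_group N"
  shows "cmod (M i j) \<le> 1"
proof (cases "i < N \<and> j < N")
  case True
  have "complex_of_real (\<Sum>k<N. (cmod (M k j))\<^sup>2) = (\<Sum>k<N. cnj (M k j) * M k j)"
    by (simp only: of_real_sum complex_norm_square mult.commute)
  also have "\<dots> = 1"
    using assms True by (simp add: unitary_group_def)
  finally have "(\<Sum>k<N. (cmod (M k j))\<^sup>2) = 1"
    using of_real_eq_1_iff by blast
  moreover have "(cmod (M i j))\<^sup>2 \<le> (\<Sum>k<N. (cmod (M k j))\<^sup>2)"
    using True by (intro member_le_sum) auto
  ultimately have "(cmod (M i j))\<^sup>2 \<le> 1\<^sup>2"
    by simp
  then show ?thesis
    by (rule power2_le_imp_le) simp
next
  case False
  then show ?thesis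
    using assms by (auto simp: unitary_group_def mat_N_def)
qed

lemma norm_mat_vec_le:
  assumes "M \<in> unitary_group N"
  shows "cmod (mat_vec N M x a) \<le> (\<Sum>j<N. cmod (x j))"
proof -
  have "cmod (mat_vec N M x a) \<le> (\<Sum>j<N. cmod (M a j) * cmod (x j))"
    unfolding mat_vec_def norm_mult[symmetric] by (rule norm_sum)
  also have "\<dots> \<le> (\<Sum>j<N. cmod (x j))"
    using unitary_entry_norm_le_1[OF assms] by (intro sum_mono mult_left_le_one_le) auto
  finally show ?thesis .
qed

lemma norm_linear_form_mat_vec_le:
  assumes "M \<in> unitary_group N"
  shows "cmod (\<Sum>i<N. \<alpha> i * mat_vec N M x i) \<le> (\<Sum>i<N. cmod (\<alpha> i)) * (\<Sum>j<N. cmod (x j))"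
proof -
  have "cmod (\<Sum>i<N. \<alpha> i * mat_vec N M x i) \<le> (\<Sum>i<N. cmod (\<alpha> i) * cmod (mat_vec N M x i))"
    unfolding norm_mult[symmetric] by (rule norm_sum)
  also have "\<dots> \<le> (\<Sum>i<N. cmod (\<alpha> i) * (\<Sum>j<N. cmod (x j)))"
    using norm_mat_vec_le[OF assms] by (intro sum_mono mult_left_mono) auto
  finally show ?thesis
    by (simp add: sum_distrib_right)
qed

lemma sum_norm_mat_vec_sq:
  assumes M: "M \<in> unitary_group N"
  shows "(\<Sum>a<N. (cmod (mat_vec N M x a))\<^sup>2) = (\<Sum>j<N. (cmod (x j))\<^sup>2)"
proof -
  have orth: "(\<Sum>a<N. cnj (M a k) * M a j) = (if k = j then 1 else 0)" if "k < N" "j < N" for k j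
    using M that by (simp add: unitary_group_def)
  have "complex_of_real (\<Sum>a<N. (cmod (mat_vec N M x a))\<^sup>2)
      = (\<Sum>a<N. \<Sum>j<N. \<Sum>k<N. x j * cnj (x k) * (cnj (M a k) * M a j))"
    by (simp only: of_real_sum complex_norm_square mat_vec_def cnj_sum sum_product)
      (simp add: mult_ac)
  also have "\<dots> = (\<Sum>j<N. \<Sum>k<N. x j * cnj (x k) * (\<Sum>a<N. cnj (M a k) * M a j))"
    by (simp only: sum_distrib_left) (subst sum.swap, rule sum.cong[OF refl], rule sum.swap)
  also have "\<dots> = (\<Sum>j<N. x j * cnj (x j))"
    by (simp add: orth if_distrib[of "\<lambda>z. _ * z"] sum.delta cong: if_cong)
  also have "\<dots> = complex_of_real (\<Sum>j<N. (cmod (x j))\<^sup>2)"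
    by (simp only: of_real_sum complex_norm_square)
  finally show ?thesis
    by (rule of_real_eq_iff[THEN iffD1])
qed

lemma act_eq_mat_vec: "i < N \<Longrightarrow> act N M x i = mat_vec N M x i"
  by (simp add: act_def mat_vec_def)

lemma act_shift: "act N M x (i + N) = x (i + N)"
  by (simp add: act_def)

lemma act_in_l2:
  assumes "x \<in> l2"
  shows "act N M x \<in> l2"
  using assms summable_iff_shift[of "\<lambda>i. (cmod (x i))\<^sup>2" N]
    summable_iff_shift[of "\<lambda>i. (cmod (act N M x i))\<^sup>2" N]
  by (simp add: l2_def act_shift)

lemma act_in_Kball:
  assumes x: "x \<in> Kball" and M: "M \<in> unitary_group N"
  shows "act N M x \<in> Kball"
proof -
  have sx: "summable (\<lambda>i. (cmod (x i))\<^sup>2)"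
    using x by (simp add: Kball_iff)
  have sa: "summable (\<lambda>i. (cmod (act N M x i))\<^sup>2)"
    using act_in_l2 x Kball_subset_l2 by (auto simp: l2_def)
  have "(\<Sum>i<N. (cmod (act N M x i))\<^sup>2) = (\<Sum>i<N. (cmod (x i))\<^sup>2)"
    using sum_norm_mat_vec_sq[OF M, of x] by (simp add: act_eq_mat_vec)
  then have "(\<Sum>i. (cmod (act N M x i))\<^sup>2) = (\<Sum>i. (cmod (x i))\<^sup>2)"
    using suminf_split_initial_segment[OF sx, of N] suminf_split_initial_segment[OF sa, of N]
    by (simp add: act_shift)
  with x sa show ?thesis
    by (simp add: Kball_iff)
qed

lemma l2_inner_act:
  assumes "v \<in> l2" and "x \<in> l2"
  shows "l2_inner v (act N M x) = (\<Sum>i<N. cnj (v i) * mat_vec N M x i) + l2_inner_tail v x N"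
proof -
  have "l2_inner_tail v (act N M x) N = l2_inner_tail v x N"
    by (simp add: l2_inner_tail_def act_shift)
  moreover have "(\<Sum>i<N. cnj (v i) * act N M x i) = (\<Sum>i<N. cnj (v i) * mat_vec N M x i)"
    by (simp add: act_eq_mat_vec)
  ultimately show ?thesis
    using l2_inner_split[OF assms(1) act_in_l2[OF assms(2), of N M], of N] by simp
qed

lemma open_vimage_act:
  assumes "generate_topology_on weak_subbasis W" and x: "x \<in> l2"
  shows "open {M. act N M x \<in> W}"
  using assms(1)
proof induction
  case Empty
  then show ?case by simp
next
  case (Int a b)
  then show ?case
    by (simp add: Collect_conj_eq open_Int)
next
  case (UN K)
  have "{M. act N M x \<in> \<Union>K} = (\<Union>k\<in>K. {M. act N M x \<in> k})"
    by auto
  with UN show ?case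
    by auto
next
  case (Basis s)
  from Basis.hyps obtain v U where s: "s = {x \<in> l2. l2_inner v x \<in> U}" "v \<in> l2" "open U"
    unfolding weak_subbasis_def by blast
  have "{M. act N M x \<in> s} = (\<lambda>M. (\<Sum>i<N. cnj (v i) * mat_vec N M x i) + l2_inner_tail v x N) -` U"
    using s act_in_l2[OF x] l2_inner_act[OF s(2) x] by auto
  also have "open \<dots>"
    by (intro open_vimage s(3) continuous_intros continuous_on_mat_vec)
  finally show ?case .
qed

section \<open>Second moments under Haar measure\<close>

lemma norm_add_sq_le:
  fixes a b :: "'a::real_normed_vector"
  shows "(norm (a + b))\<^sup>2 \<le> 2 * (norm a)\<^sup>2 + 2 * (norm b)\<^sup>2"
proof -
  have "(norm (a + b))\<^sup>2 \<le> (norm a + norm b)\<^sup>2"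
    by (simp add: norm_triangle_ineq power_mono)
  also have "\<dots> \<le> 2 * (norm a)\<^sup>2 + 2 * (norm b)\<^sup>2"
    using mult_le_weighted_squares[of 1 "norm a" "norm b"] by (simp add: power2_sum)
  finally show ?thesis .
qed

text \<open>A Chebyshev-type estimate: away from the basic neighbourhood of \<open>0\<close>, the
  sum of the squares \<open>|\<langle>v, w\<rangle>|\<^sup>2 / d\<^sup>2\<close> is at least \<open>1\<close>.\<close>

lemma deviation_le_sum_inner_sq:
  fixes f :: "(nat \<Rightarrow> complex) \<Rightarrow> real"
  assumes B: "\<And>z. z \<in> Kball \<Longrightarrow> \<bar>f z\<bar> \<le> B" and V: "finite V" and d: "d > 0"
    and near: "\<forall>w \<in> Kball \<inter> weak_basic_nbhd V d (\<lambda>_. 0). \<bar>f w - f (\<lambda>_. 0)\<bar> < e"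
    and w: "w \<in> Kball"
  shows "\<bar>f w - f (\<lambda>_. 0)\<bar> \<le> e + 2 * B / d\<^sup>2 * (\<Sum>v\<in>V. (cmod (l2_inner v w))\<^sup>2)"
proof -
  let ?C = "2 * B / d\<^sup>2"
  have "0 \<le> B"
    using B[OF zero_in_Kball] by linarith
  then have C: "0 \<le> ?C"
    by simp
  show ?thesis
  proof (cases "\<forall>v\<in>V. cmod (l2_inner v w) < d")
    case True
    with w Kball_subset_l2 have "w \<in> Kball \<inter> weak_basic_nbhd V d (\<lambda>_. 0)"
      by (auto simp: weak_basic_nbhd_def)
    with near have "\<bar>f w - f (\<lambda>_. 0)\<bar> < e"
      by blast
    moreover have "0 \<le> ?C * (\<Sum>v\<in>V. (cmod (l2_inner v w))\<^sup>2)"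
      using C by (intro mult_nonneg_nonneg sum_nonneg) auto
    ultimately show ?thesis
      by linarith
  next
    case False
    then obtain u where u: "u \<in> V" "d \<le> cmod (l2_inner u w)"
      by (auto simp: not_less)
    have "d\<^sup>2 \<le> (cmod (l2_inner u w))\<^sup>2"
      using u d by (simp add: power_mono)
    also have "\<dots> \<le> (\<Sum>v\<in>V. (cmod (l2_inner v w))\<^sup>2)"
      using u V by (intro member_le_sum) auto
    finally have "?C * d\<^sup>2 \<le> ?C * (\<Sum>v\<in>V. (cmod (l2_inner v w))\<^sup>2)"
      by (rule mult_left_mono[OF _ C])
    moreover have "?C * d\<^sup>2 = 2 * B"
      using d by simp
    moreover have "(\<lambda>_. 0) \<in> Kball \<inter> weak_basic_nbhd V d (\<lambda>_. 0)"
      using d by (simp add: weak_basic_nbhd_def zero_in_Kball zero_in_l2)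
    with near have "0 \<le> e"
      by fastforce
    moreover have "\<bar>f w - f (\<lambda>_. 0)\<bar> \<le> 2 * B"
      using B[OF w] B[OF zero_in_Kball] by linarith
    ultimately show ?thesis
      by linarith
  qed
qed

locale unitary_haar =
  fixes N :: nat
    and G :: "(nat \<Rightarrow> nat \<Rightarrow> complex) set"
    and \<mu> :: "(nat \<Rightarrow> nat \<Rightarrow> complex) measure"
  assumes group_cases: "G = unitary_group N \<or> G = special_unitary_group N"
    and haar: "is_haar N G \<mu>"
begin

sublocale prob_space \<mu>
  using haar by (simp add: is_haar_def)

lemma sets_eq: "sets \<mu> = sets (restrict_space borel G)"
  using haar by (simp add: is_haar_def)

lemma space_eq: "space \<mu> = G"
  using sets_eq_imp_space_eq[OF sets_eq] by (simp add: space_restrict_space)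

lemma unitary_if_in_space: "h \<in> space \<mu> \<Longrightarrow> h \<in> unitary_group N"
  using group_cases by (auto simp: space_eq special_unitary_group_def)

lemma borel_measurable_continuous:
  assumes "continuous_on UNIV F"
  shows "F \<in> borel_measurable \<mu>"
  using measurable_restrict_space1[OF borel_measurable_continuous_onI[OF assms]]
  by (simp add: measurable_cong_sets[OF sets_eq refl])

lemma integrable_bounded_continuous:
  fixes F :: "(nat \<Rightarrow> nat \<Rightarrow> complex) \<Rightarrow> 'b::{banach, second_countable_topology}"
  assumes "continuous_on UNIV F" and "\<And>h. h \<in> G \<Longrightarrow> norm (F h) \<le> B"
  shows "integrable \<mu> F"
  using assms by (intro integrable_const_bound[where B = B] borel_measurable_continuous)
    (auto simp: space_eq)

lemma integral_mat_mult_left: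
  fixes F :: "(nat \<Rightarrow> nat \<Rightarrow> complex) \<Rightarrow> 'b::{banach, second_countable_topology}"
  assumes g: "g \<in> G" and closed: "\<And>h. h \<in> G \<Longrightarrow> mat_mult N g h \<in> G"
    and F: "F \<in> borel_measurable \<mu>"
  shows "(\<integral>h. F h \<partial>\<mu>) = (\<integral>h. F (mat_mult N g h) \<partial>\<mu>)"
proof -
  have "mat_mult N g \<in> measurable (restrict_space borel G) (restrict_space borel G)"
    using borel_measurable_continuous_onI[OF continuous_on_mat_mult_left] closed
    by (intro measurable_restrict_space3) auto
  then have mult: "mat_mult N g \<in> measurable \<mu> \<mu>"
    by (simp cong: measurable_cong_sets add: sets_eq)
  have "distr \<mu> \<mu> (mat_mult N g) = \<mu>"
  proof (rule measure_eqI)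
    fix A
    assume "A \<in> sets (distr \<mu> \<mu> (mat_mult N g))"
    then have A: "A \<in> sets \<mu>"
      by simp
    have "mat_mult N g -` A \<inter> space \<mu> = {h \<in> G. mat_mult N g h \<in> A}"
      by (auto simp: space_eq)
    then show "emeasure (distr \<mu> \<mu> (mat_mult N g)) A = emeasure \<mu> A"
      using haar g A by (simp add: emeasure_distr[OF mult A] is_haar_def)
  qed simp
  then show ?thesis
    using integral_distr[OF mult F] by simp
qed

text \<open>Left multiplication by a unimodular phase matrix times a permutation matrix lies in
  \<open>SU(N)\<close>, so Haar measure is invariant under the corresponding row operation.\<close>

lemma integral_scale_permute_rows:
  fixes F :: "(nat \<Rightarrow> nat \<Rightarrow> complex) \<Rightarrow> 'b::{banach, second_countable_topology}"
  assumes t: "t permutes {..<N}" and c: "\<And>i. i < N \<Longrightarrow> cmod (c i) = 1"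
    and det: "(\<Prod>i<N. c i) * of_int (sign t) = 1" and F: "continuous_on UNIV F"
  shows "(\<integral>h. F h \<partial>\<mu>) = (\<integral>h. F (scale_permute_rows c t h) \<partial>\<mu>)"
proof -
  let ?g = "scale_permute_rows c t (mat_id N)"
  have g: "?g \<in> G"
    using scale_permute_rows_in_group[OF group_cases t c det mat_id_in_group[OF group_cases]] .
  have mult: "mat_mult N ?g h = scale_permute_rows c t h" if "h \<in> G" for h
    using that unitary_if_in_space[of h] t
    by (intro mat_mult_scale_permute_rows_id) (auto simp: space_eq unitary_group_def)
  have "(\<integral>h. F h \<partial>\<mu>) = (\<integral>h. F (mat_mult N ?g h) \<partial>\<mu>)"
    using scale_permute_rows_in_group[OF group_cases t c det]
    by (intro integral_mat_mult_left g borel_measurable_continuous F) (simp add: mult)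
  also have "\<dots> = (\<integral>h. F (scale_permute_rows c t h) \<partial>\<mu>)"
    by (intro Bochner_Integration.integral_cong) (simp_all add: space_eq mult)
  finally show ?thesis .
qed

lemma integrable_mat_vec_mult_cnj: "integrable \<mu> (\<lambda>h. mat_vec N h x a * cnj (mat_vec N h x b))"
proof (rule integrable_bounded_continuous)
  show "continuous_on UNIV (\<lambda>h. mat_vec N h x a * cnj (mat_vec N h x b))"
    by (intro continuous_intros continuous_on_mat_vec)
  show "norm (mat_vec N h x a * cnj (mat_vec N h x b)) \<le> (\<Sum>j<N. cmod (x j)) * (\<Sum>j<N. cmod (x j))"
    if "h \<in> G" for h
    using that unitary_if_in_space[of h]
    by (auto simp: space_eq norm_mult intro!: mult_mono norm_mat_vec_le sum_nonneg)
qed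

lemma integrable_norm_mat_vec_sq: "integrable \<mu> (\<lambda>h. (cmod (mat_vec N h x a))\<^sup>2)"
proof (rule integrable_bounded_continuous)
  show "continuous_on UNIV (\<lambda>h. (cmod (mat_vec N h x a))\<^sup>2)"
    by (intro continuous_intros continuous_on_mat_vec)
  show "norm ((cmod (mat_vec N h x a))\<^sup>2) \<le> (\<Sum>j<N. cmod (x j))\<^sup>2" if "h \<in> G" for h
    using that unitary_if_in_space[of h]
    by (auto simp: space_eq intro!: power_mono norm_mat_vec_le)
qed

lemma integral_mat_vec_mult_cnj_eq_0:
  assumes ab: "a < N" "b < N" "a \<noteq> b"
  shows "(\<integral>h. mat_vec N h x a * cnj (mat_vec N h x b) \<partial>\<mu>) = 0"
proof -
  define c where "c = (\<lambda>i. if i = a then \<i> else if i = b then - \<i> else 1)"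
  have "(\<Prod>i<N. c i) = (\<Prod>i\<in>{a, b}. c i)"
    by (rule prod.mono_neutral_right) (auto simp: c_def ab)
  then have det: "(\<Prod>i<N. c i) * of_int (sign id) = 1"
    using ab by (simp add: c_def)
  let ?F = "\<lambda>h. mat_vec N h x a * cnj (mat_vec N h x b)"
  have "(\<integral>h. ?F h \<partial>\<mu>) = (\<integral>h. ?F (scale_permute_rows c id h) \<partial>\<mu>)"
    using det by (intro integral_scale_permute_rows) (auto simp: c_def intro!: continuous_intros continuous_on_mat_vec)
  also have "\<dots> = (\<integral>h. - ?F h \<partial>\<mu>)"
    using ab by (simp add: mat_vec_scale_permute_rows c_def algebra_simps)
  finally show ?thesis
    by simp
qed

lemma integral_norm_mat_vec_sq_eq:
  assumes ab: "a < N" "b < N"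
  shows "(\<integral>h. (cmod (mat_vec N h x a))\<^sup>2 \<partial>\<mu>) = (\<integral>h. (cmod (mat_vec N h x b))\<^sup>2 \<partial>\<mu>)"
proof (cases "a = b")
  case False
  define c where "c = (\<lambda>i. if i = b then -1 else (1::complex))"
  let ?t = "Transposition.transpose a b"
  have "(\<Prod>i<N. c i) = (\<Prod>i\<in>{b}. c i)"
    by (rule prod.mono_neutral_right) (auto simp: c_def ab)
  then have det: "(\<Prod>i<N. c i) * of_int (sign ?t) = 1"
    using False by (simp add: c_def sign_swap_id)
  have "(\<integral>h. (cmod (mat_vec N h x a))\<^sup>2 \<partial>\<mu>)
      = (\<integral>h. (cmod (mat_vec N (scale_permute_rows c ?t h) x a))\<^sup>2 \<partial>\<mu>)"
    using det ab
    by (intro integral_scale_permute_rows)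
      (auto simp: c_def permutes_swap_id intro!: continuous_intros continuous_on_mat_vec)
  also have "\<dots> = (\<integral>h. (cmod (mat_vec N h x b))\<^sup>2 \<partial>\<mu>)"
    by (simp add: mat_vec_scale_permute_rows c_def)
  finally show ?thesis .
qed simp

lemma integral_norm_mat_vec_sq:
  assumes a: "a < N"
  shows "(\<integral>h. (cmod (mat_vec N h x a))\<^sup>2 \<partial>\<mu>) = (\<Sum>j<N. (cmod (x j))\<^sup>2) / N"
proof -
  have "N * (\<integral>h. (cmod (mat_vec N h x a))\<^sup>2 \<partial>\<mu>) = (\<Sum>b<N. \<integral>h. (cmod (mat_vec N h x a))\<^sup>2 \<partial>\<mu>)"
    by simp
  also have "\<dots> = (\<Sum>b<N. \<integral>h. (cmod (mat_vec N h x b))\<^sup>2 \<partial>\<mu>)"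
    using integral_norm_mat_vec_sq_eq[OF a] by (intro sum.cong) auto
  also have "\<dots> = (\<integral>h. (\<Sum>b<N. (cmod (mat_vec N h x b))\<^sup>2) \<partial>\<mu>)"
    by (rule Bochner_Integration.integral_sum[symmetric]) (rule integrable_norm_mat_vec_sq)
  also have "\<dots> = (\<integral>h. (\<Sum>j<N. (cmod (x j))\<^sup>2) \<partial>\<mu>)"
    by (intro Bochner_Integration.integral_cong refl sum_norm_mat_vec_sq unitary_if_in_space)
  also have "\<dots> = (\<Sum>j<N. (cmod (x j))\<^sup>2)"
    by (simp add: prob_space)
  finally show ?thesis
    using a by (simp add: field_simps)
qed

lemma integral_norm_linear_form_sq:
  "(\<integral>h. (cmod (\<Sum>i<N. \<alpha> i * mat_vec N h x i))\<^sup>2 \<partial>\<mu>)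
    = (\<Sum>i<N. (cmod (\<alpha> i))\<^sup>2) * (\<Sum>j<N. (cmod (x j))\<^sup>2) / N"
proof -
  let ?w = "\<lambda>h i. mat_vec N h x i"
  let ?Y = "(\<Sum>j<N. (cmod (x j))\<^sup>2)"
  have expand: "complex_of_real ((cmod (\<Sum>i<N. \<alpha> i * ?w h i))\<^sup>2)
      = (\<Sum>i<N. \<Sum>j<N. (\<alpha> i * cnj (\<alpha> j)) * (?w h i * cnj (?w h j)))" for h
    by (simp only: complex_norm_square cnj_sum sum_product) (simp add: algebra_simps)
  have diag: "(\<integral>h. ?w h i * cnj (?w h i) \<partial>\<mu>) = complex_of_real (?Y / N)" if "i < N" for i
  proof -
    have "(\<integral>h. ?w h i * cnj (?w h i) \<partial>\<mu>) = (\<integral>h. complex_of_real ((cmod (?w h i))\<^sup>2) \<partial>\<mu>)"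
      by (simp only: complex_norm_square)
    also have "\<dots> = complex_of_real (\<integral>h. (cmod (?w h i))\<^sup>2 \<partial>\<mu>)"
      by (rule integral_complex_of_real)
    finally show ?thesis
      using integral_norm_mat_vec_sq[OF that, of x] by simp
  qed
  have "complex_of_real (\<integral>h. (cmod (\<Sum>i<N. \<alpha> i * ?w h i))\<^sup>2 \<partial>\<mu>)
      = (\<integral>h. complex_of_real ((cmod (\<Sum>i<N. \<alpha> i * ?w h i))\<^sup>2) \<partial>\<mu>)"
    by (rule integral_complex_of_real[symmetric])
  also have "\<dots> = (\<Sum>i<N. \<Sum>j<N. (\<alpha> i * cnj (\<alpha> j)) * (\<integral>h. ?w h i * cnj (?w h j) \<partial>\<mu>))"
    by (simp only: expand)
      (simp add: Bochner_Integration.integral_sum integrable_sum integrable_mat_vec_mult_cnj)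
  also have "\<dots> = (\<Sum>i<N. \<Sum>j<N. if j = i then (\<alpha> i * cnj (\<alpha> i)) * complex_of_real (?Y / N) else 0)"
    by (intro sum.cong refl) (auto simp: diag integral_mat_vec_mult_cnj_eq_0)
  also have "\<dots> = (\<Sum>i<N. (\<alpha> i * cnj (\<alpha> i)) * complex_of_real (?Y / N))"
    by simp
  also have "\<dots> = complex_of_real (\<Sum>i<N. (cmod (\<alpha> i))\<^sup>2 * (?Y / N))"
    by (simp only: of_real_sum of_real_mult complex_norm_square)
  also have "(\<Sum>i<N. (cmod (\<alpha> i))\<^sup>2 * (?Y / N)) = (\<Sum>i<N. (cmod (\<alpha> i))\<^sup>2) * ?Y / N"
    by (subst sum_distrib_right[symmetric]) simp
  finally show ?thesis
    by (rule of_real_eq_iff[THEN iffD1])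
qed


lemma integrable_norm_affine_form_sq:
  "integrable \<mu> (\<lambda>h. (cmod ((\<Sum>i<N. \<alpha> i * mat_vec N h x i) + c))\<^sup>2)"
proof (rule integrable_bounded_continuous)
  show "continuous_on UNIV (\<lambda>h. (cmod ((\<Sum>i<N. \<alpha> i * mat_vec N h x i) + c))\<^sup>2)"
    by (intro continuous_intros continuous_on_mat_vec)
  fix h
  assume "h \<in> G"
  then have "cmod (\<Sum>i<N. \<alpha> i * mat_vec N h x i) \<le> (\<Sum>i<N. cmod (\<alpha> i)) * (\<Sum>j<N. cmod (x j))"
    using unitary_if_in_space norm_linear_form_mat_vec_le by (simp add: space_eq)
  then have "cmod ((\<Sum>i<N. \<alpha> i * mat_vec N h x i) + c)
      \<le> (\<Sum>i<N. cmod (\<alpha> i)) * (\<Sum>j<N. cmod (x j)) + cmod c"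
    using norm_triangle_ineq[of "\<Sum>i<N. \<alpha> i * mat_vec N h x i" c] by linarith
  then show "norm ((cmod ((\<Sum>i<N. \<alpha> i * mat_vec N h x i) + c))\<^sup>2)
      \<le> ((\<Sum>i<N. cmod (\<alpha> i)) * (\<Sum>j<N. cmod (x j)) + cmod c)\<^sup>2"
    by (simp add: power_mono)
qed

lemma integrable_norm_l2_inner_act_sq:
  assumes "x \<in> l2" and "v \<in> l2"
  shows "integrable \<mu> (\<lambda>h. (cmod (l2_inner v (act N h x)))\<^sup>2)"
  using integrable_norm_affine_form_sq[of "\<lambda>i. cnj (v i)" x "l2_inner_tail v x N"]
  by (simp add: l2_inner_act assms)

lemma integral_norm_l2_inner_act_sq_le:
  assumes x: "x \<in> l2" and v: "v \<in> l2"
  shows "(\<integral>h. (cmod (l2_inner v (act N h x)))\<^sup>2 \<partial>\<mu>)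
    \<le> 2 * ((\<Sum>i. (cmod (v i))\<^sup>2) * (\<Sum>i. (cmod (x i))\<^sup>2)) / N + 2 * (cmod (l2_inner_tail v x N))\<^sup>2"
proof -
  let ?S = "\<lambda>h. \<Sum>i<N. cnj (v i) * mat_vec N h x i"
  let ?t = "l2_inner_tail v x N"
  have S: "integrable \<mu> (\<lambda>h. (cmod (?S h))\<^sup>2)"
    using integrable_norm_affine_form_sq[of "\<lambda>i. cnj (v i)" x 0] by simp
  have "(\<integral>h. (cmod (l2_inner v (act N h x)))\<^sup>2 \<partial>\<mu>) \<le> (\<integral>h. 2 * (cmod (?S h))\<^sup>2 + 2 * (cmod ?t)\<^sup>2 \<partial>\<mu>)"
    using S integrable_norm_l2_inner_act_sq[OF x v]
    by (intro integral_mono) (auto simp: l2_inner_act[OF v x] norm_add_sq_le)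
  also have "\<dots> = 2 * (\<integral>h. (cmod (?S h))\<^sup>2 \<partial>\<mu>) + 2 * (cmod ?t)\<^sup>2"
    using S by (simp add: prob_space)
  also have "(\<integral>h. (cmod (?S h))\<^sup>2 \<partial>\<mu>) = (\<Sum>i<N. (cmod (v i))\<^sup>2) * (\<Sum>j<N. (cmod (x j))\<^sup>2) / N"
    using integral_norm_linear_form_sq[of "\<lambda>i. cnj (v i)" x] by simp
  also have "\<dots> \<le> (\<Sum>i. (cmod (v i))\<^sup>2) * (\<Sum>i. (cmod (x i))\<^sup>2) / N"
  proof -
    have "(\<Sum>i<N. (cmod (v i))\<^sup>2) \<le> (\<Sum>i. (cmod (v i))\<^sup>2)"
      "(\<Sum>i<N. (cmod (x i))\<^sup>2) \<le> (\<Sum>i. (cmod (x i))\<^sup>2)"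
      using v x by (auto intro!: sum_le_suminf simp: l2_def)
    moreover have "0 \<le> (\<Sum>i. (cmod (v i))\<^sup>2)"
      using v by (auto intro: suminf_nonneg simp: l2_def)
    ultimately show ?thesis
      by (intro divide_right_mono mult_mono sum_nonneg) auto
  qed
  finally show ?thesis
    by simp
qed

lemma measurable_act:
  assumes x: "x \<in> Kball"
  shows "(\<lambda>h. act N h x) \<in> measurable \<mu> (borel_of_top K_top)"
  unfolding borel_of_top_def
proof (rule measurable_measure_of)
  show "{U. openin K_top U} \<subseteq> Pow (topspace K_top)"
    using openin_subset by auto
  show "(\<lambda>h. act N h x) \<in> space \<mu> \<rightarrow> topspace K_top"
    using act_in_Kball[OF x] unitary_if_in_space by (auto simp: topspace_K_top)
  fix U
  assume "U \<in> {U. openin K_top U}"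
  then obtain T where T: "openin weak_top T" "U = T \<inter> Kball"
    unfolding K_top_def openin_subtopology by auto
  have "open {h. act N h x \<in> T}"
    using T(1) x Kball_subset_l2
    by (intro open_vimage_act) (auto simp: weak_top_eq openin_topology_generated_by_iff)
  then have "G \<inter> {h. act N h x \<in> T} \<in> sets \<mu>"
    unfolding sets_eq sets_restrict_space by auto
  moreover have "(\<lambda>h. act N h x) -` U \<inter> space \<mu> = G \<inter> {h. act N h x \<in> T}"
    using T(2) act_in_Kball[OF x] unitary_if_in_space by (auto simp: space_eq)
  ultimately show "(\<lambda>h. act N h x) -` U \<inter> space \<mu> \<in> sets \<mu>"
    by simp
qed

lemma integral_deviation_le:
  assumes x: "x \<in> Kball" and f: "continuous_map K_top euclideanreal f"
    and B: "\<And>z. z \<in> Kball \<Longrightarrow> \<bar>f z\<bar> \<le> B" and V: "finite V" "V \<subseteq> l2" and d: "d > 0"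
    and near: "\<forall>w \<in> Kball \<inter> weak_basic_nbhd V d (\<lambda>_. 0). \<bar>f w - f (\<lambda>_. 0)\<bar> < e"
  shows "\<bar>(\<integral>h. f (act N h x) \<partial>\<mu>) - f (\<lambda>_. 0)\<bar>
    \<le> e + 2 * B / d\<^sup>2 * (\<Sum>v\<in>V. \<integral>h. (cmod (l2_inner v (act N h x)))\<^sup>2 \<partial>\<mu>)"
proof -
  let ?C = "2 * B / d\<^sup>2"
  have in_K: "act N h x \<in> Kball" if "h \<in> space \<mu>" for h
    using act_in_Kball[OF x] unitary_if_in_space[OF that] .
  have xl2: "x \<in> l2"
    using x Kball_subset_l2 by blast
  have f_int: "integrable \<mu> (\<lambda>h. f (act N h x))"
    using measurable_comp[OF measurable_act[OF x] K_top_continuous_borel_measurable[OF f]] in_K B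
    by (intro integrable_const_bound[where B = B]) (auto simp: comp_def)
  have sum_int: "integrable \<mu> (\<lambda>h. \<Sum>v\<in>V. (cmod (l2_inner v (act N h x)))\<^sup>2)"
    using V(2) by (intro Bochner_Integration.integrable_sum integrable_norm_l2_inner_act_sq[OF xl2]) auto
  have "\<bar>(\<integral>h. f (act N h x) \<partial>\<mu>) - f (\<lambda>_. 0)\<bar> = \<bar>\<integral>h. f (act N h x) - f (\<lambda>_. 0) \<partial>\<mu>\<bar>"
    using f_int by (simp add: prob_space)
  also have "\<dots> \<le> (\<integral>h. \<bar>f (act N h x) - f (\<lambda>_. 0)\<bar> \<partial>\<mu>)"
    by (rule integral_abs_bound)
  also have "\<dots> \<le> (\<integral>h. e + ?C * (\<Sum>v\<in>V. (cmod (l2_inner v (act N h x)))\<^sup>2) \<partial>\<mu>)"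
  proof (rule integral_mono)
    show "integrable \<mu> (\<lambda>h. \<bar>f (act N h x) - f (\<lambda>_. 0)\<bar>)"
      using f_int by auto
    show "integrable \<mu> (\<lambda>h. e + ?C * (\<Sum>v\<in>V. (cmod (l2_inner v (act N h x)))\<^sup>2))"
      using sum_int by auto
    show "\<bar>f (act N h x) - f (\<lambda>_. 0)\<bar> \<le> e + ?C * (\<Sum>v\<in>V. (cmod (l2_inner v (act N h x)))\<^sup>2)"
      if "h \<in> space \<mu>" for h
      by (rule deviation_le_sum_inner_sq[OF B V(1) d near in_K[OF that]])
  qed
  also have "\<dots> = e + ?C * (\<Sum>v\<in>V. \<integral>h. (cmod (l2_inner v (act N h x)))\<^sup>2 \<partial>\<mu>)"
    using sum_int V(2) integrable_norm_l2_inner_act_sq[OF xl2]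
    by (simp add: prob_space Bochner_Integration.integral_sum subset_iff)
  finally show ?thesis .
qed

end

section \<open>Convergence of the orbit measures\<close>

lemma integral_norm_l2_inner_act_sq_tendsto_0:
  assumes H: "\<And>N. unitary_haar N (G N) (\<mu> N)" and x: "x \<in> l2" and v: "v \<in> l2"
  shows "(\<lambda>N. \<integral>h. (cmod (l2_inner v (act N h x)))\<^sup>2 \<partial>\<mu> N) \<longlonglongrightarrow> 0"
proof (rule tendsto_sandwich)
  let ?bound = "\<lambda>N. 2 * ((\<Sum>i. (cmod (v i))\<^sup>2) * (\<Sum>i. (cmod (x i))\<^sup>2)) / real N
    + 2 * (cmod (l2_inner_tail v x N))\<^sup>2"
  show "\<forall>\<^sub>F N in sequentially. 0 \<le> (\<integral>h. (cmod (l2_inner v (act N h x)))\<^sup>2 \<partial>\<mu> N)"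
    by simp
  show "\<forall>\<^sub>F N in sequentially. (\<integral>h. (cmod (l2_inner v (act N h x)))\<^sup>2 \<partial>\<mu> N) \<le> ?bound N"
    using unitary_haar.integral_norm_l2_inner_act_sq_le[OF H x v] by simp
  have "(\<lambda>N. cmod (l2_inner_tail v x N)) \<longlonglongrightarrow> 0"
    using l2_inner_tail_tendsto_zero[OF v x] by (rule tendsto_norm_zero)
  then have "?bound \<longlonglongrightarrow> 0 + 2 * 0\<^sup>2"
    by (intro tendsto_add lim_const_over_n tendsto_mult tendsto_const tendsto_power)
  then show "?bound \<longlonglongrightarrow> 0"
    by simp
qed simp

lemma integral_orbit_tendsto:
  assumes H: "\<And>N. unitary_haar N (G N) (\<mu> N)" and x: "x \<in> Kball"
    and f: "continuous_map K_top euclideanreal f"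
  shows "(\<lambda>N. \<integral>h. f (act N h x) \<partial>\<mu> N) \<longlonglongrightarrow> f (\<lambda>_. 0)"
proof (rule tendstoI)
  fix e :: real
  assume "e > 0"
  obtain B where B: "\<And>z. z \<in> Kball \<Longrightarrow> \<bar>f z\<bar> \<le> B"
    using K_top_continuous_bounded[OF f] by blast
  obtain V d where V: "finite V" "V \<subseteq> l2" and d: "d > 0"
    and near: "\<forall>w \<in> Kball \<inter> weak_basic_nbhd V d (\<lambda>_. 0). \<bar>f w - f (\<lambda>_. 0)\<bar> < e / 2"
    using K_top_continuous_basic_nbhd[OF f zero_in_Kball, of "e / 2"] \<open>e > 0\<close> by auto
  let ?err = "\<lambda>N. 2 * B / d\<^sup>2 * (\<Sum>v\<in>V. \<integral>h. (cmod (l2_inner v (act N h x)))\<^sup>2 \<partial>\<mu> N)"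
  have "?err \<longlonglongrightarrow> 2 * B / d\<^sup>2 * (\<Sum>v\<in>V. 0)"
    using V(2) x Kball_subset_l2
    by (intro tendsto_mult tendsto_const tendsto_sum integral_norm_l2_inner_act_sq_tendsto_0[OF H]) auto
  moreover have "2 * B / d\<^sup>2 * (\<Sum>v\<in>V. 0) < e / 2"
    using \<open>e > 0\<close> by simp
  ultimately have "\<forall>\<^sub>F N in sequentially. ?err N < e / 2"
    by (rule order_tendstoD(2))
  then show "\<forall>\<^sub>F N in sequentially. dist (\<integral>h. f (act N h x) \<partial>\<mu> N) (f (\<lambda>_. 0)) < e"
  proof eventually_elim
    case (elim N)
    have "\<bar>(\<integral>h. f (act N h x) \<partial>\<mu> N) - f (\<lambda>_. 0)\<bar> \<le> e / 2 + ?err N"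
      by (rule unitary_haar.integral_deviation_le[OF H x f B V d near])
    with elim show ?case
      by (simp add: dist_real_def)
  qed
qed

theorem mainTheorem13:
  fixes G :: "nat \<Rightarrow> (nat \<Rightarrow> nat \<Rightarrow> complex) set"
    and haar :: "nat \<Rightarrow> (nat \<Rightarrow> nat \<Rightarrow> complex) measure"
    and x :: "nat \<Rightarrow> complex"
  assumes G: "\<And>N. G N = unitary_group N \<or> G N = special_unitary_group N"
    and haar: "\<And>N. is_haar N (G N) (haar N)"
    and x: "x \<in> Kball"
  shows "\<forall>f. continuous_map K_top euclideanreal f \<longrightarrow>
    (\<lambda>N. \<integral>y. f y \<partial>(orbit_measure N (haar N) x))
      \<longlonglongrightarrow> (\<integral>y. f y \<partial>(return (borel_of_top K_top) (\<lambda>_. 0)))"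
proof (intro allI impI)
  fix f
  assume f: "continuous_map K_top euclideanreal f"
  have H: "unitary_haar N (G N) (haar N)" for N
    using G haar by (simp add: unitary_haar_def)
  have "(\<integral>y. f y \<partial>(orbit_measure N (haar N) x)) = (\<integral>h. f (act N h x) \<partial>haar N)" for N
    unfolding orbit_measure_def
    by (rule integral_distr[OF unitary_haar.measurable_act[OF H x] K_top_continuous_borel_measurable[OF f]])
  moreover have "(\<integral>y. f y \<partial>(return (borel_of_top K_top) (\<lambda>_. 0))) = f (\<lambda>_. 0)"
    by (rule integral_return)
      (simp_all add: space_borel_of_K_top zero_in_Kball K_top_continuous_borel_measurable[OF f])
  ultimately show "(\<lambda>N. \<integral>y. f y \<partial>(orbit_measure N (haar N) x))
      \<longlonglongrightarrow> (\<integral>y. f y \<partial>(return (borel_of_top K_top) (\<lambda>_. 0)))"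
    using integral_orbit_tendsto[OF H x f] by simp
qed

end
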